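(* Let $X$ be a Banach space. If $X$ contains a ccs Daugavet point, then $X$ has the strong diameter 2 property (every convex combination of slices of $B_X$ has diameter $2$); in particular $X$ is not strongly regular.
   Context: $X$ is a real or complex Banach space with closed unit ball $B_X$ and unit sphere $S_X$. A slice of $B_X$ is a non-empty set $S(x^*,\delta)=\{y\in B_X:\operatorname{Re}x^*(y)>\|x^*\|-\delta\}$ with $x^*\in X^*$, $\delta>0$. A convex combination of slices (ccs) of $B_X$ is a set $\sum_{i=1}^n\lambda_iS_i$ where $\lambda_i\in(0,1]$, $\sum_i\lambda_i=1$ and each $S_i$ is a slice of $B_X$. An element $x\in S_X$ is a ccs Daugavet point if $\sup_{y\in C}\|x-y\|=2$ for every ccs $C$ of $B_X$. $X$ is strongly regular if every non-empty closed bounded convex subset of $X$ contains convex combinations of its slices of arbitrarily small diameter. *)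

theory Defs
  imports "HOL-Analysis.Analysis"
begin

text \<open>Banach space X: a type of class banach (real scalars; a complex Banach
space is in particular a real Banach space, and slices defined via Re x* coincide
with slices defined via real functionals of the same norm).\<close>

definition ball_slice :: "('a::real_normed_vector \<Rightarrow> real) \<Rightarrow> real \<Rightarrow> 'a set" where
  "ball_slice f \<delta> = {y. norm y \<le> 1 \<and> f y > onorm f - \<delta>}"

definition is_ccs_ball :: "'a::real_normed_vector set \<Rightarrow> bool" where
  "is_ccs_ball C \<longleftrightarrow> (\<exists>(n::nat) (l::nat \<Rightarrow> real) (f::nat \<Rightarrow> 'a \<Rightarrow> real) (d::nat \<Rightarrow> real).
     n \<ge> 1 \<and> (\<forall>i<n. 0 < l i \<and> l i \<le> 1) \<and> (\<Sum>i<n. l i) = 1 \<and>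
     (\<forall>i<n. bounded_linear (f i) \<and> d i > 0 \<and> ball_slice (f i) (d i) \<noteq> {}) \<and>
     C = {(\<Sum>i<n. l i *\<^sub>R y i) | y. \<forall>i<n. y i \<in> ball_slice (f i) (d i)})"

definition ccs_daugavet_point :: "'a::real_normed_vector \<Rightarrow> bool" where
  "ccs_daugavet_point x \<longleftrightarrow> norm x = 1 \<and>
     (\<forall>C. is_ccs_ball C \<longrightarrow> (SUP y\<in>C. norm (x - y)) = 2)"

definition strong_diameter_two :: "'a::real_normed_vector itself \<Rightarrow> bool" where
  "strong_diameter_two _ \<longleftrightarrow> (\<forall>C::'a set. is_ccs_ball C \<longrightarrow> diameter C = 2)"

definition set_slice :: "'a::real_normed_vector set \<Rightarrow> ('a \<Rightarrow> real) \<Rightarrow> real \<Rightarrow> 'a set" where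
  "set_slice K f \<delta> = {y\<in>K. f y > (SUP z\<in>K. f z) - \<delta>}"

definition is_ccs_of :: "'a::real_normed_vector set \<Rightarrow> 'a set \<Rightarrow> bool" where
  "is_ccs_of K C \<longleftrightarrow> (\<exists>(n::nat) (l::nat \<Rightarrow> real) (f::nat \<Rightarrow> 'a \<Rightarrow> real) (d::nat \<Rightarrow> real).
     n \<ge> 1 \<and> (\<forall>i<n. 0 < l i \<and> l i \<le> 1) \<and> (\<Sum>i<n. l i) = 1 \<and>
     (\<forall>i<n. bounded_linear (f i) \<and> d i > 0 \<and> set_slice K (f i) (d i) \<noteq> {}) \<and>
     C = {(\<Sum>i<n. l i *\<^sub>R y i) | y. \<forall>i<n. y i \<in> set_slice K (f i) (d i)})"

definition strongly_regular :: "'a::real_normed_vector itself \<Rightarrow> bool" where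
  "strongly_regular _ \<longleftrightarrow> (\<forall>K::'a set. K \<noteq> {} \<and> closed K \<and> bounded K \<and> convex K \<longrightarrow>
     (\<forall>\<epsilon>>0. \<exists>C. is_ccs_of K C \<and> C \<subseteq> K \<and> diameter C < \<epsilon>))"

end

theory Submission
  imports Defs
begin

text \<open>If \<open>C = \<Sum> \<lambda>\<^sub>i S\<^sub>i\<close> is a convex combination of slices of the unit ball, then so is
  \<open>M = \<onehalf>C + \<onehalf>(-C)\<close>, built from the slices \<open>S\<^sub>i\<close> and \<open>-S\<^sub>i\<close> with weights \<open>\<lambda>\<^sub>i/2\<close>.
  As \<open>\<parallel>x - m\<parallel> \<le> 1 + \<parallel>m\<parallel>\<close>, a ccs Daugavet point \<open>x\<close> forces points of norm close to 1
  into \<open>M\<close>, and such a point \<open>\<onehalf>(c - c')\<close> gives \<open>c, c' \<in> C\<close> at distance close to 2.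
  Strong regularity applied to the unit ball would yield a convex combination of slices of
  diameter below 1, since slices of the ball as a bounded set are the slices defined
  through the dual norm.\<close>

lemma sum_lessThan_add_nat:
  "(\<Sum>i<n + (m::nat). g i) = (\<Sum>i<n. g i) + (\<Sum>i<m. g (n + i))"
  by (induction m) (simp_all add: add.assoc)

lemma is_ccs_ballI:
  fixes n :: nat and f :: "nat \<Rightarrow> 'a::real_normed_vector \<Rightarrow> real"
  assumes "n \<ge> 1" "\<forall>i<n. 0 < l i \<and> l i \<le> 1" "(\<Sum>i<n. l i) = 1"
    and "\<forall>i<n. bounded_linear (f i) \<and> d i > 0 \<and> ball_slice (f i) (d i) \<noteq> {}"
  shows "is_ccs_ball {(\<Sum>i<n. l i *\<^sub>R y i) | y. \<forall>i<n. y i \<in> ball_slice (f i) (d i)}"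
  unfolding is_ccs_ball_def using assms
  by (intro exI[of _ n] exI[of _ l] exI[of _ f] exI[of _ d]) auto

lemma is_ccs_ballE:
  fixes C :: "'a::real_normed_vector set"
  assumes "is_ccs_ball C"
  obtains n :: nat and l f d where "n \<ge> 1" "\<forall>i<n. 0 < l i \<and> l i \<le> 1" "(\<Sum>i<n. l i) = 1"
    and "\<forall>i<n. bounded_linear (f i) \<and> d i > 0 \<and> ball_slice (f i) (d i) \<noteq> {}"
    and "C = {(\<Sum>i<n. l i *\<^sub>R y i) | y. \<forall>i<n. y i \<in> ball_slice (f i) (d i)}"
  using assms unfolding is_ccs_ball_def by blast

lemma ball_slice_uminus:
  assumes "bounded_linear f"
  shows "y \<in> ball_slice (\<lambda>z. - f z) d \<longleftrightarrow> - y \<in> ball_slice f d"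
proof -
  interpret f: bounded_linear f by fact
  show ?thesis unfolding ball_slice_def onorm_neg by (auto simp: f.neg)
qed

lemma is_ccs_ball_uminus:
  assumes "is_ccs_ball C"
  shows "is_ccs_ball (uminus ` C)"
proof -
  from assms obtain n :: nat and l f d where n: "n \<ge> 1"
    and l: "\<forall>i<n. 0 < l i \<and> l i \<le> 1" "(\<Sum>i<n. l i) = 1"
    and f: "\<forall>i<n. bounded_linear (f i) \<and> d i > 0 \<and> ball_slice (f i) (d i) \<noteq> {}"
    and C: "C = {(\<Sum>i<n. l i *\<^sub>R y i) | y. \<forall>i<n. y i \<in> ball_slice (f i) (d i)}"
    by (rule is_ccs_ballE)
  let ?S = "\<lambda>i. ball_slice (\<lambda>z. - f i z) (d i)"
  have neg: "i < n \<Longrightarrow> y \<in> ?S i \<longleftrightarrow> - y \<in> ball_slice (f i) (d i)" for i y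
    using f by (simp add: ball_slice_uminus)
  have eq: "uminus ` C = {(\<Sum>i<n. l i *\<^sub>R y i) | y. \<forall>i<n. y i \<in> ?S i}"
  proof (intro equalityI subsetI)
    fix c assume "c \<in> uminus ` C"
    then obtain y where "c = - (\<Sum>i<n. l i *\<^sub>R y i)" "\<forall>i<n. y i \<in> ball_slice (f i) (d i)"
      unfolding C by blast
    then show "c \<in> {(\<Sum>i<n. l i *\<^sub>R y i) | y. \<forall>i<n. y i \<in> ?S i}"
      using neg by (intro CollectI exI[of _ "\<lambda>i. - y i"]) (simp add: sum_negf)
  next
    fix c assume "c \<in> {(\<Sum>i<n. l i *\<^sub>R y i) | y. \<forall>i<n. y i \<in> ?S i}"
    then obtain y where "c = (\<Sum>i<n. l i *\<^sub>R y i)" "\<forall>i<n. y i \<in> ?S i"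
      by blast
    then have "- c \<in> C"
      unfolding C using neg by (intro CollectI exI[of _ "\<lambda>i. - y i"]) (simp add: sum_negf)
    then show "c \<in> uminus ` C" by (metis image_eqI minus_minus)
  qed
  have "?S i \<noteq> {}" if "i < n" for i
  proof -
    obtain y where "y \<in> ball_slice (f i) (d i)" using f \<open>i < n\<close> by blast
    then have "- y \<in> ?S i" using neg \<open>i < n\<close> by simp
    then show ?thesis by blast
  qed
  then show ?thesis
    unfolding eq using n l f by (intro is_ccs_ballI) (auto intro: bounded_linear_minus)
qed

lemma is_ccs_ball_convex_combination:
  fixes C D :: "'a::real_normed_vector set"
  assumes C: "is_ccs_ball C" and D: "is_ccs_ball D" and t: "0 < t" "t < 1"
  shows "is_ccs_ball {t *\<^sub>R c + (1 - t) *\<^sub>R e | c e. c \<in> C \<and> e \<in> D}"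
proof -
  from C obtain n :: nat and l f d where n: "n \<ge> 1"
    and l: "\<forall>i<n. 0 < l i \<and> l i \<le> 1" "(\<Sum>i<n. l i) = 1"
    and f: "\<forall>i<n. bounded_linear (f i) \<and> d i > 0 \<and> ball_slice (f i) (d i) \<noteq> {}"
    and C_eq: "C = {(\<Sum>i<n. l i *\<^sub>R y i) | y. \<forall>i<n. y i \<in> ball_slice (f i) (d i)}"
    by (rule is_ccs_ballE)
  from D obtain m :: nat and l' f' d' where m: "m \<ge> 1"
    and l': "\<forall>i<m. 0 < l' i \<and> l' i \<le> 1" "(\<Sum>i<m. l' i) = 1"
    and f': "\<forall>i<m. bounded_linear (f' i) \<and> d' i > 0 \<and> ball_slice (f' i) (d' i) \<noteq> {}"
    and D_eq: "D = {(\<Sum>i<m. l' i *\<^sub>R y i) | y. \<forall>i<m. y i \<in> ball_slice (f' i) (d' i)}"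
    by (rule is_ccs_ballE)
  define L where "L i = (if i < n then t * l i else (1 - t) * l' (i - n))" for i
  define F where "F i = (if i < n then f i else f' (i - n))" for i
  define \<delta> where "\<delta> i = (if i < n then d i else d' (i - n))" for i
  define S where "S i = ball_slice (F i) (\<delta> i)" for i
  have S: "S i = (if i < n then ball_slice (f i) (d i) else ball_slice (f' (i - n)) (d' (i - n)))" for i
    by (simp add: F_def \<delta>_def S_def)
  have sum_L: "(\<Sum>i<n + m. L i *\<^sub>R y i) =
      t *\<^sub>R (\<Sum>i<n. l i *\<^sub>R y i) + (1 - t) *\<^sub>R (\<Sum>i<m. l' i *\<^sub>R y (n + i))" for y :: "nat \<Rightarrow> 'a"
    by (simp add: sum_lessThan_add_nat L_def scaleR_sum_right)
  have "{t *\<^sub>R c + (1 - t) *\<^sub>R e | c e. c \<in> C \<and> e \<in> D} =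
      {(\<Sum>i<n + m. L i *\<^sub>R y i) | y. \<forall>i<n + m. y i \<in> S i}"
  proof (intro equalityI subsetI)
    fix x assume "x \<in> {t *\<^sub>R c + (1 - t) *\<^sub>R e | c e. c \<in> C \<and> e \<in> D}"
    then obtain y z where x: "x = t *\<^sub>R (\<Sum>i<n. l i *\<^sub>R y i) + (1 - t) *\<^sub>R (\<Sum>i<m. l' i *\<^sub>R z i)"
      and y: "\<forall>i<n. y i \<in> ball_slice (f i) (d i)" and z: "\<forall>i<m. z i \<in> ball_slice (f' i) (d' i)"
      unfolding C_eq D_eq by blast
    define w where "w i = (if i < n then y i else z (i - n))" for i
    have "x = (\<Sum>i<n + m. L i *\<^sub>R w i)" unfolding sum_L x w_def by simp
    moreover have "\<forall>i<n + m. w i \<in> S i" using y z by (auto simp: w_def S)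
    ultimately show "x \<in> {(\<Sum>i<n + m. L i *\<^sub>R y i) | y. \<forall>i<n + m. y i \<in> S i}" by blast
  next
    fix x assume "x \<in> {(\<Sum>i<n + m. L i *\<^sub>R y i) | y. \<forall>i<n + m. y i \<in> S i}"
    then obtain w where x: "x = (\<Sum>i<n + m. L i *\<^sub>R w i)" and w: "\<forall>i<n + m. w i \<in> S i" by blast
    have "w i \<in> ball_slice (f i) (d i)" if "i < n" for i
      using w[rule_format, of i] that by (simp add: S)
    then have c: "(\<Sum>i<n. l i *\<^sub>R w i) \<in> C" unfolding C_eq by blast
    have "w (n + i) \<in> ball_slice (f' i) (d' i)" if "i < m" for i
      using w[rule_format, of "n + i"] that by (simp add: S)
    then have e: "(\<Sum>i<m. l' i *\<^sub>R w (n + i)) \<in> D"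
      unfolding D_eq by (intro CollectI exI[of _ "\<lambda>i. w (n + i)"]) auto
    show "x \<in> {t *\<^sub>R c + (1 - t) *\<^sub>R e | c e. c \<in> C \<and> e \<in> D}"
      unfolding x sum_L using c e by blast
  qed
  moreover have "is_ccs_ball {(\<Sum>i<n + m. L i *\<^sub>R y i) | y. \<forall>i<n + m. y i \<in> S i}"
  proof -
    have "0 < L i \<and> L i \<le> 1" if "i < n + m" for i
    proof (cases "i < n")
      case True
      then show ?thesis using l(1) t by (simp add: L_def mult_le_one less_imp_le)
    next
      case False
      then have "i - n < m" using that by simp
      then show ?thesis using l'(1) t False by (simp add: L_def mult_le_one less_imp_le)
    qed
    moreover have "(\<Sum>i<n + m. L i) = 1"
      using l l' by (simp add: sum_lessThan_add_nat L_def sum_distrib_left[symmetric])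
    moreover have "\<forall>i<n + m. bounded_linear (F i) \<and> \<delta> i > 0 \<and> S i \<noteq> {}"
      using f f' by (auto simp: F_def \<delta>_def S)
    ultimately show ?thesis
      unfolding S_def using n by (intro is_ccs_ballI) auto
  qed
  ultimately show ?thesis by simp
qed

lemma is_ccs_ball_norm_le:
  assumes "is_ccs_ball C" "c \<in> C"
  shows "norm c \<le> 1"
proof -
  from assms(1) obtain n :: nat and l f d where
    l: "\<forall>i<n. 0 < l i \<and> l i \<le> 1" "(\<Sum>i<n. l i) = 1"
    and C: "C = {(\<Sum>i<n. l i *\<^sub>R y i) | y. \<forall>i<n. y i \<in> ball_slice (f i) (d i)}"
    by (rule is_ccs_ballE)
  from assms(2) obtain y where c: "c = (\<Sum>i<n. l i *\<^sub>R y i)" and y: "\<forall>i<n. norm (y i) \<le> 1"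
    unfolding C ball_slice_def by blast
  have "norm c \<le> (\<Sum>i<n. norm (l i *\<^sub>R y i))" unfolding c by (rule norm_sum)
  also have "\<dots> \<le> (\<Sum>i<n. l i)"
    using l y by (intro sum_mono) (auto intro: mult_left_le)
  finally show ?thesis using l by simp
qed

lemma is_ccs_ball_nonempty:
  assumes "is_ccs_ball C"
  shows "C \<noteq> {}"
proof -
  from assms obtain n :: nat and l f d where
    f: "\<forall>i<n. bounded_linear (f i) \<and> d i > 0 \<and> ball_slice (f i) (d i) \<noteq> {}"
    and C: "C = {(\<Sum>i<n. l i *\<^sub>R y i) | y. \<forall>i<n. y i \<in> ball_slice (f i) (d i)}"
    by (rule is_ccs_ballE)
  define y where "y i = (SOME z. z \<in> ball_slice (f i) (d i))" for i
  have "\<forall>i<n. y i \<in> ball_slice (f i) (d i)"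
    using f by (simp add: y_def some_in_eq)
  then have "(\<Sum>i<n. l i *\<^sub>R y i) \<in> C" unfolding C by blast
  then show ?thesis by blast
qed

lemma diameter_ccs_ball_le:
  assumes "is_ccs_ball C"
  shows "diameter C \<le> 2"
proof (rule diameter_le)
  fix a b assume "a \<in> C" "b \<in> C"
  then have "norm a \<le> 1" "norm b \<le> 1" using is_ccs_ball_norm_le[OF assms] by auto
  then show "norm (a - b) \<le> 2" using norm_triangle_ineq4[of a b] by simp
qed simp

lemma ccs_daugavet_point_near_sphere:
  fixes x :: "'a::real_normed_vector" and C :: "'a set"
  assumes x: "ccs_daugavet_point x" and C: "is_ccs_ball C" and "\<epsilon> > 0"
  obtains c where "c \<in> C" "norm c > 1 - \<epsilon>"
proof -
  have nx: "norm x = 1" and sup: "(SUP c\<in>C. norm (x - c)) = 2"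
    using x C unfolding ccs_daugavet_point_def by auto
  have "norm (x - c) \<le> 2" if "c \<in> C" for c
    using norm_triangle_ineq4[of x c] is_ccs_ball_norm_le[OF C that] nx by simp
  then have "bdd_above ((\<lambda>c. norm (x - c)) ` C)" by (rule bdd_aboveI2)
  moreover have "2 - \<epsilon> < (SUP c\<in>C. norm (x - c))" using sup \<open>\<epsilon> > 0\<close> by simp
  ultimately obtain c where "c \<in> C" "2 - \<epsilon> < norm (x - c)"
    using less_cSUP_iff[OF is_ccs_ball_nonempty[OF C]] by blast
  moreover have "norm (x - c) \<le> 1 + norm c" using norm_triangle_ineq4[of x c] nx by simp
  ultimately show thesis using that by simp
qed

lemma diameter_ccs_ball_eq_2:
  fixes x :: "'a::real_normed_vector" and C :: "'a set"
  assumes x: "ccs_daugavet_point x" and C: "is_ccs_ball C"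
  shows "diameter C = 2"
proof (rule antisym)
  show "diameter C \<le> 2" using C by (rule diameter_ccs_ball_le)
  let ?M = "{(1/2) *\<^sub>R c + (1 - 1/2) *\<^sub>R e | c e. c \<in> C \<and> e \<in> uminus ` C}"
  have M: "is_ccs_ball ?M"
    using C by (intro is_ccs_ball_convex_combination is_ccs_ball_uminus) auto
  have bounded: "bounded C"
    unfolding bounded_iff using is_ccs_ball_norm_le[OF C] by blast
  show "2 \<le> diameter C"
  proof (rule field_le_epsilon)
    fix \<epsilon> :: real assume "\<epsilon> > 0"
    then have "\<epsilon> / 2 > 0" by simp
    then obtain m where "m \<in> ?M" "norm m > 1 - \<epsilon> / 2"
      by (rule ccs_daugavet_point_near_sphere[OF x M])
    then obtain c e where ce: "c \<in> C" "e \<in> C" and m: "m = (1/2) *\<^sub>R c + (1/2) *\<^sub>R (- e)"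
      by auto
    have "m = (1/2) *\<^sub>R (c - e)" unfolding m by (simp add: algebra_simps)
    then have "2 - \<epsilon> < dist c e"
      using \<open>norm m > 1 - \<epsilon> / 2\<close> by (simp add: dist_norm)
    also have "\<dots> \<le> diameter C" using bounded ce by (rule diameter_bounded_bound)
    finally show "2 \<le> diameter C + \<epsilon>" by simp
  qed
qed

lemma strong_diameter_two_if_ccs_daugavet_point:
  fixes x :: "'a::real_normed_vector"
  assumes "ccs_daugavet_point x"
  shows "strong_diameter_two TYPE('a)"
  unfolding strong_diameter_two_def using diameter_ccs_ball_eq_2[OF assms] by blast

lemma SUP_cball_eq_onorm:
  fixes f :: "'a::real_normed_vector \<Rightarrow> real"
  assumes f: "bounded_linear f"
  shows "(SUP z\<in>cball 0 1. f z) = onorm f"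
proof -
  interpret bounded_linear f by fact
  have le_onorm: "f z \<le> onorm f" if "z \<in> cball 0 1" for z
  proof -
    have "f z \<le> onorm f * norm z" using onorm[OF f, of z] by simp
    also have "\<dots> \<le> onorm f" using that onorm_pos_le[OF f] by (simp add: mult_left_le)
    finally show ?thesis .
  qed
  then have bdd: "bdd_above (f ` cball 0 1)" by (rule bdd_aboveI2)
  show ?thesis
  proof (rule antisym)
    show "(SUP z\<in>cball 0 1. f z) \<le> onorm f" by (rule cSUP_least) (auto intro: le_onorm)
    show "onorm f \<le> (SUP z\<in>cball 0 1. f z)"
    proof (rule onorm_bound)
      show "0 \<le> (SUP z\<in>cball 0 1. f z)"
        using cSUP_upper[OF _ bdd, of 0] by (simp add: zero)
      fix z :: 'a
      show "norm (f z) \<le> (SUP z\<in>cball 0 1. f z) * norm z"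
      proof (cases "z = 0")
        case False
        text \<open>Test against the unit vector \<open>\<pm>z/\<parallel>z\<parallel>\<close> on which \<open>f\<close> is non-negative.\<close>
        define s where "s = (if f z \<ge> 0 then 1 else -1) / norm z"
        have "f (s *\<^sub>R z) \<le> (SUP z\<in>cball 0 1. f z)"
          using False bdd by (intro cSUP_upper) (auto simp: s_def)
        moreover have "f (s *\<^sub>R z) = norm (f z) / norm z"
          unfolding s_def scale by auto
        ultimately show ?thesis using False by (simp add: pos_divide_le_eq)
      qed (simp add: zero)
    qed
  qed
qed

lemma set_slice_cball:
  assumes "bounded_linear f"
  shows "set_slice (cball 0 1) f \<delta> = ball_slice f \<delta>"
  unfolding set_slice_def ball_slice_def SUP_cball_eq_onorm[OF assms] by auto

lemma is_ccs_of_cball_iff: "is_ccs_of (cball 0 1) C \<longleftrightarrow> is_ccs_ball C"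
  unfolding is_ccs_of_def is_ccs_ball_def
  by (intro ex_cong1 conj_cong refl) (auto simp: set_slice_cball)

lemma not_strongly_regular_if_strong_diameter_two:
  assumes "strong_diameter_two TYPE('a::real_normed_vector)"
  shows "\<not> strongly_regular TYPE('a)"
proof
  assume "strongly_regular TYPE('a)"
  then obtain C :: "'a set" where "is_ccs_of (cball 0 1) C" "diameter C < 1"
    unfolding strongly_regular_def
    by (meson bounded_cball closed_cball convex_cball cball_eq_empty not_less zero_le_one zero_less_one)
  with assms show False
    unfolding strong_diameter_two_def is_ccs_of_cball_iff by fastforce
qed

theorem mainTheorem2:
  fixes x :: "'a::banach"
  assumes "ccs_daugavet_point x"
  shows "strong_diameter_two TYPE('a) \<and> \<not> strongly_regular TYPE('a)"
  using strong_diameter_two_if_ccs_daugavet_point[OF assms]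
    not_strongly_regular_if_strong_diameter_two by blast

end
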